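(* Let $I_\cap^2$ be as defined in the context. Then, for all jointly distributed finite-valued random variables: (GP) $I_\cap^2(\{X_1,X_2\};Y)\geq 0$; (S) $I_\cap^2(\{X_1,X_2\};Y)=I_\cap^2(\{X_2,X_1\};Y)$; (I) $I_\cap^2(\{X_1\};Y)=I(X_1;Y)$; (M) $I_\cap^2(\{X_1,X_2\};Y)\leq I_\cap^2(\{X_1\};Y)$, with equality if $H(X_1|X_2)=0$; (SM) $I_\cap^2(\{X_1,X_2\};Y)\leq I_\cap^2(\{X_1\};Y)$, with equality if $I(X_1X_2;Y)=I(X_2;Y)$. However, $I_\cap^2$ does not satisfy (LP) and (Id): (LP) there exist finite-valued $(X_1,X_2,Y)$ for which the derived synergy $SI^2(\{X_1X_2\};Y):=I(X_1X_2;Y)-I(X_1;Y)-I(X_2;Y)+I_\cap^2(\{X_1,X_2\};Y)$ is negative (so the derived decomposition is not nonnegative); (Id) there exist finite-valued $(X_1,X_2)$ such that $I_\cap^2(\{X_1,X_2\};(X_1,X_2))\neq I(X_1;X_2)$.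
   Context: For finite-valued random variables, $A-B-C$ means that $A$ and $C$ are conditionally independent given $B$. For jointly distributed finite random variables $(X_1,X_2,Y)$ define $$I_\cap^2(\{X_1,X_2\};Y)=\sup_{Q}\, I(Q;Y),$$ over all finite-valued random variables $Q$ jointly distributed with $(X_1,X_2,Y)$ (marginal of $(X_1,X_2,Y)$ fixed) such that $Q-X_1-Y$ and $Q-X_2-Y$ are Markov chains; for a single predictor, $I_\cap^2(\{X_1\};Y)=\sup_Q I(Q;Y)$ over all such $Q$ with $Q-X_1-Y$. $X_1X_2$ denotes the joint random variable $(X_1,X_2)$; $H$ and $I$ denote Shannon entropy and (conditional) mutual information. *)

theory Defs
  imports "HOL-Probability.Probability"
begin

text \<open>Finite-valued jointly distributed random variables are represented by their
joint probability mass function (with finite support). Logarithms are base 2.\<close>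

definition entropy_pmf :: "'u pmf \<Rightarrow> real" where
  "entropy_pmf r = - (\<Sum>x\<in>set_pmf r. pmf r x * log 2 (pmf r x))"

definition cond_entropy_pmf :: "('u \<times> 'v) pmf \<Rightarrow> real" where
  "cond_entropy_pmf r = entropy_pmf r - entropy_pmf (map_pmf snd r)"

definition mi_pmf :: "('u \<times> 'v) pmf \<Rightarrow> real" where
  "mi_pmf r = (\<Sum>z\<in>set_pmf r. pmf r z *
      log 2 (pmf r z / (pmf (map_pmf fst r) (fst z) * pmf (map_pmf snd r) (snd z))))"

text \<open>Markov chain A - B - C for the joint distribution r of (A,B,C):
  A and C conditionally independent given B, i.e. P(a,b,c) P(b) = P(a,b) P(b,c).\<close>
definition markov_pmf :: "('u \<times> 'v \<times> 'w) pmf \<Rightarrow> bool" where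
  "markov_pmf r \<longleftrightarrow> (\<forall>a b c.
      pmf r (a, b, c) * pmf (map_pmf (\<lambda>(a, b, c). b) r) b =
      pmf (map_pmf (\<lambda>(a, b, c). (a, b)) r) (a, b) * pmf (map_pmf (\<lambda>(a, b, c). (b, c)) r) (b, c))"

text \<open>I_cap^2({X1,X2};Y) for the joint distribution p of (X1,X2,Y). The auxiliary
  finite-valued Q takes values in nat (every finite-valued Q can be relabelled into nat).\<close>
definition Icap2 :: "('a \<times> 'b \<times> 'c) pmf \<Rightarrow> real" where
  "Icap2 p = (SUP q \<in> {q :: (nat \<times> 'a \<times> 'b \<times> 'c) pmf.
        finite (set_pmf q) \<and> map_pmf snd q = p \<and>
        markov_pmf (map_pmf (\<lambda>(t, a, b, c). (t, a, c)) q) \<and>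
        markov_pmf (map_pmf (\<lambda>(t, a, b, c). (t, b, c)) q)}.
      mi_pmf (map_pmf (\<lambda>(t, a, b, c). (t, c)) q))"

definition Icap1 :: "('a \<times> 'c) pmf \<Rightarrow> real" where
  "Icap1 p = (SUP q \<in> {q :: (nat \<times> 'a \<times> 'c) pmf.
        finite (set_pmf q) \<and> map_pmf snd q = p \<and> markov_pmf q}.
      mi_pmf (map_pmf (\<lambda>(t, a, c). (t, c)) q))"

definition SI2 :: "('a \<times> 'b \<times> 'c) pmf \<Rightarrow> real" where
  "SI2 p = mi_pmf (map_pmf (\<lambda>(a, b, c). ((a, b), c)) p)
         - mi_pmf (map_pmf (\<lambda>(a, b, c). (a, c)) p)
         - mi_pmf (map_pmf (\<lambda>(a, b, c). (b, c)) p) + Icap2 p"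

end

theory Submission
  imports Defs
begin

text \<open>
  By the data-processing inequality every admissible Q has I(Q;Y) \<le> I(X1;Y), and a constant
  Q gives I(Q;Y) = 0. The bound is attained by a relabelled copy of X1 as soon as X1 - X2 - Y is a
  Markov chain; this chain follows from H(X1|X2) = 0, and, by the chain rule
  I(X1X2;Y) = I(X2;Y) + I(X1;Y|X2) together with I(X1;Y|X2) = 0 only for Markov chains, from
  I(X1X2;Y) = I(X2;Y). With a single predictor the copy of X1 always attains the bound.

  For (X1,X2) uniform on {(0,0),(0,1),(1,1)} and Y an injective function of (X1,X2), the
  chain Q - X1 - Y read at X1 = 0 and the chain Q - X2 - Y read at X2 = 1 force
  P(Q = t, Y = y) to be the same for all three values y. Hence Q is independent of Y and the
  intersection information vanishes, whereas I(X1;X2) = log 3 - 4/3 > 0, and for Y = X1 + X2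
  the derived synergy is 4/3 - log 3 < 0.
\<close>

section \<open>Fibre probabilities\<close>

definition fiber_prob :: "'x pmf \<Rightarrow> ('x \<Rightarrow> 'y) \<Rightarrow> 'x \<Rightarrow> real" where
  "fiber_prob M f x = pmf (map_pmf f M) (f x)"

lemma fiber_prob_eq_measure: "fiber_prob M f x = measure_pmf.prob M {y. f y = f x}"
  unfolding fiber_prob_def pmf_map by (simp add: vimage_def)

lemma fiber_prob_cong:
  assumes "\<And>y. y \<in> set_pmf M \<Longrightarrow> f y = f x \<longleftrightarrow> g y = g x"
  shows "fiber_prob M f x = fiber_prob M g x"
proof -
  have "{y. f y = f x} \<inter> set_pmf M = {y. g y = g x} \<inter> set_pmf M" using assms by auto
  then show ?thesis unfolding fiber_prob_eq_measure by (metis measure_Int_set_pmf)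
qed

lemma fiber_prob_pos: "x \<in> set_pmf M \<Longrightarrow> fiber_prob M f x > 0"
  unfolding fiber_prob_def by (simp add: pmf_positive)

lemma pmf_map_le_pmf_map_comp: "pmf (map_pmf f M) y \<le> pmf (map_pmf (\<lambda>x. g (f x)) M) (g y)"
  unfolding pmf_map by (rule measure_pmf.finite_measure_mono) auto

lemma sum_set_pmf_map_pmf:
  assumes "finite (set_pmf M)"
  shows "(\<Sum>z\<in>set_pmf (map_pmf g M). pmf (map_pmf g M) z * h z) = (\<Sum>x\<in>set_pmf M. pmf M x * h (g x))"
proof -
  have "(\<Sum>z\<in>set_pmf (map_pmf g M). pmf (map_pmf g M) z * h z) = integral\<^sup>L (map_pmf g M) h"
    using assms by (subst integral_measure_pmf_real[where A="set_pmf (map_pmf g M)"]) (auto simp: mult.commute)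
  also have "\<dots> = integral\<^sup>L M (\<lambda>x. h (g x))" by simp
  also have "\<dots> = (\<Sum>x\<in>set_pmf M. pmf M x * h (g x))"
    using assms by (subst integral_measure_pmf_real[where A="set_pmf M"]) (auto simp: mult.commute)
  finally show ?thesis .
qed

lemma mi_pmf_map_pmf:
  assumes "finite (set_pmf M)"
  shows "mi_pmf (map_pmf g M) = (\<Sum>x\<in>set_pmf M. pmf M x *
     log 2 (fiber_prob M g x / (fiber_prob M (\<lambda>y. fst (g y)) x * fiber_prob M (\<lambda>y. snd (g y)) x)))"
  unfolding mi_pmf_def using assms
  by (subst sum_set_pmf_map_pmf) (auto simp: fiber_prob_def map_pmf_comp)

lemma entropy_pmf_map_pmf:
  assumes "finite (set_pmf M)"
  shows "entropy_pmf (map_pmf g M) = - (\<Sum>x\<in>set_pmf M. pmf M x * log 2 (fiber_prob M g x))"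
  unfolding entropy_pmf_def using assms by (subst sum_set_pmf_map_pmf) (auto simp: fiber_prob_def)

lemma mi_pmf_eq_0_if_indep:
  assumes "finite (set_pmf r)"
    and "\<And>x y. (x, y) \<in> set_pmf r \<Longrightarrow> pmf r (x, y) = pmf (map_pmf fst r) x * pmf (map_pmf snd r) y"
  shows "mi_pmf r = 0"
  unfolding mi_pmf_def
proof (rule sum.neutral, intro ballI)
  fix z assume z: "z \<in> set_pmf r"
  have "pmf (map_pmf fst r) (fst z) > 0" "pmf (map_pmf snd r) (snd z) > 0"
    using z by (auto simp: pmf_positive)
  then show "pmf r z * log 2 (pmf r z / (pmf (map_pmf fst r) (fst z) * pmf (map_pmf snd r) (snd z))) = 0"
    using assms(2)[of "fst z" "snd z"] z by simp
qed

lemma mi_pmf_relabel_fst: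
  assumes "finite (set_pmf M)" and "inj_on e (u ` set_pmf M)"
  shows "mi_pmf (map_pmf (\<lambda>x. (e (u x), w x)) M) = mi_pmf (map_pmf (\<lambda>x. (u x, w x)) M)"
  unfolding mi_pmf_map_pmf[OF assms(1)]
proof (rule sum.cong[OF refl])
  fix x assume "x \<in> set_pmf M"
  then have "fiber_prob M (\<lambda>x. (e (u x), w x)) x = fiber_prob M (\<lambda>x. (u x, w x)) x"
    and "fiber_prob M (\<lambda>y. e (u y)) x = fiber_prob M u x"
    using assms(2) by (auto intro!: fiber_prob_cong simp: inj_on_def)
  then show "pmf M x * log 2 (fiber_prob M (\<lambda>x. (e (u x), w x)) x / (fiber_prob M (\<lambda>y. fst (e (u y), w y)) x * fiber_prob M (\<lambda>y. snd (e (u y), w y)) x)) =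
         pmf M x * log 2 (fiber_prob M (\<lambda>x. (u x, w x)) x / (fiber_prob M (\<lambda>y. fst (u y, w y)) x * fiber_prob M (\<lambda>y. snd (u y, w y)) x))"
    by simp
qed

section \<open>Gibbs' inequality and conditional mutual information\<close>

lemma ln_div_ge_diff:
  fixes r s :: real
  assumes "r > 0" "s > 0"
  shows "r - s \<le> r * ln (r / s)" and "r * ln (r / s) = r - s \<Longrightarrow> r = s"
proof -
  have "ln (s / r) \<le> s / r - 1" using assms by (intro ln_le_minus_one) simp
  moreover have ln_inv: "ln (r / s) = - ln (s / r)" using assms by (simp add: ln_div)
  ultimately have "r * (1 - s / r) \<le> r * ln (r / s)" using assms by (intro mult_left_mono) auto
  moreover have "r * (1 - s / r) = r - s" using assms by (simp add: field_simps)
  ultimately show "r - s \<le> r * ln (r / s)" by simp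
  assume "r * ln (r / s) = r - s"
  then have "ln (s / r) = s / r - 1" using assms ln_inv by (simp add: field_simps)
  then have "s / r = 1" using assms by (intro ln_eq_minus_one) auto
  then show "r = s" using assms by simp
qed

lemma gibbs_inequality:
  fixes r s :: "'a \<Rightarrow> real"
  assumes "finite T" "S \<subseteq> T" "\<And>z. z \<in> S \<Longrightarrow> r z > 0" "\<And>z. z \<in> S \<Longrightarrow> s z > 0"
    "\<And>z. z \<in> T \<Longrightarrow> s z \<ge> 0" "sum r S = 1" "sum s T = 1"
  shows "(\<Sum>z\<in>S. r z * ln (r z / s z)) \<ge> 0"
    and "(\<Sum>z\<in>S. r z * ln (r z / s z)) = 0 \<Longrightarrow> z \<in> T \<Longrightarrow> s z = (if z \<in> S then r z else 0)"
proof -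
  have finS: "finite S" using assms(1,2) finite_subset by blast
  define d where "d z = r z * ln (r z / s z) - (r z - s z)" for z
  have d_nonneg: "z \<in> S \<Longrightarrow> d z \<ge> 0" for z
    unfolding d_def using ln_div_ge_diff(1)[of "r z" "s z"] assms(3,4) by simp
  have sum_T_S: "sum s T = sum s S + sum s (T - S)"
    using assms(1,2) by (metis add.commute sum.subset_diff)
  have rest_nonneg: "sum s (T - S) \<ge> 0" using assms(5) by (intro sum_nonneg) auto
  have split: "(\<Sum>z\<in>S. r z * ln (r z / s z)) = sum d S + sum s (T - S)"
    using sum_T_S assms(6,7) unfolding d_def sum_subtractf by simp
  moreover have "sum d S \<ge> 0" using d_nonneg by (intro sum_nonneg) auto
  ultimately show "(\<Sum>z\<in>S. r z * ln (r z / s z)) \<ge> 0" using rest_nonneg by simp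
  assume zero: "(\<Sum>z\<in>S. r z * ln (r z / s z)) = 0" and z: "z \<in> T"
  have "sum d S = 0" "sum s (T - S) = 0"
    using split zero rest_nonneg \<open>sum d S \<ge> 0\<close> by linarith+
  show "s z = (if z \<in> S then r z else 0)"
  proof (cases "z \<in> S")
    case True
    then have "d z = 0" using \<open>sum d S = 0\<close> d_nonneg finS sum_nonneg_eq_0_iff by blast
    then show ?thesis using True ln_div_ge_diff(2)[of "r z" "s z"] assms(3,4) unfolding d_def by simp
  next
    case False
    then show ?thesis using \<open>sum s (T - S) = 0\<close> assms(1,5) z sum_nonneg_eq_0_iff[of "T - S" s] by auto
  qed
qed

lemma sum_pmf_fst_eq_pmf_map_snd:
  assumes "finite X" "fst ` set_pmf r \<subseteq> X"
  shows "(\<Sum>x\<in>X. pmf r (x, y)) = pmf (map_pmf snd r) y"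
proof -
  have "pmf (map_pmf snd r) y = measure r (snd -` {y} \<inter> set_pmf r)"
    by (simp add: pmf_map measure_Int_set_pmf)
  also have "snd -` {y} \<inter> set_pmf r = (X \<times> {y}) \<inter> set_pmf r" using assms(2) by force
  also have "measure r \<dots> = sum (pmf r) (X \<times> {y})"
    using assms(1) by (simp add: measure_Int_set_pmf measure_measure_pmf_finite)
  also have "X \<times> {y} = (\<lambda>x. (x, y)) ` X" by auto
  also have "sum (pmf r) \<dots> = (\<Sum>x\<in>X. pmf r (x, y))" by (subst sum.reindex) (auto simp: inj_on_def)
  finally show ?thesis ..
qed

lemma sum_pmf_snd_eq_pmf_map_fst:
  assumes "finite X" "snd ` set_pmf r \<subseteq> X"
  shows "(\<Sum>x\<in>X. pmf r (y, x)) = pmf (map_pmf fst r) y"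
proof -
  have "pmf (map_pmf prod.swap r) (x, y) = pmf r (y, x)" for x
    using pmf_map_inj'[of prod.swap r "(y, x)"] by simp
  then show ?thesis
    using sum_pmf_fst_eq_pmf_map_snd[of X "map_pmf prod.swap r" y] assms
    by (simp add: image_image map_pmf_comp)
qed

text \<open>If P(b) = 0 then also P(a,b) = 0, so the division by zero below does no harm.\<close>
definition markov_approx :: "('u \<times> 'v \<times> 'w) pmf \<Rightarrow> 'u \<times> 'v \<times> 'w \<Rightarrow> real" where
  "markov_approx r = (\<lambda>(a, b, c). pmf (map_pmf (\<lambda>(a, b, c). (a, b)) r) (a, b) *
      pmf (map_pmf (\<lambda>(a, b, c). (b, c)) r) (b, c) / pmf (map_pmf (\<lambda>(a, b, c). b) r) b)"

lemma markov_approx_nonneg: "markov_approx r z \<ge> 0"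
  unfolding markov_approx_def by (simp add: split_beta)

lemma markov_approx_pos: "z \<in> set_pmf r \<Longrightarrow> markov_approx r z > 0"
  unfolding markov_approx_def
  by (auto simp: split_beta pmf_positive intro!: divide_pos_pos mult_pos_pos)

lemma mult_eq_iff_eq_divide_if_le:
  fixes x y z w :: real
  assumes "0 \<le> x" "0 \<le> y" "x \<le> w" "y \<le> w"
  shows "x * w = y * z \<longleftrightarrow> x = y * z / w"
  using assms by (cases "w = 0") (auto simp: eq_divide_eq)

lemma markov_pmf_iff_markov_approx: "markov_pmf r \<longleftrightarrow> (\<forall>z. pmf r z = markov_approx r z)"
proof -
  have "pmf r (a, b, c) \<le> pmf (map_pmf (\<lambda>(a, b, c). b) r) b" for a b c
    using pmf_map_le_pmf_map_comp[of "\<lambda>x. x" r "(a, b, c)" "\<lambda>(a, b, c). b"]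
    by (simp add: map_pmf_ident)
  moreover have "pmf (map_pmf (\<lambda>(a, b, c). (a, b)) r) (a, b) \<le> pmf (map_pmf (\<lambda>(a, b, c). b) r) b" for a b
  proof -
    have eq: "(\<lambda>x. snd (case x of (a, b, c) \<Rightarrow> (a, b))) = (\<lambda>(a, b, c). b)"
      by (simp add: fun_eq_iff split: prod.split)
    show ?thesis
      using pmf_map_le_pmf_map_comp[of "\<lambda>(a, b, c). (a, b)" r "(a, b)" snd] by (simp only: eq snd_conv)
  qed
  ultimately show ?thesis
    unfolding markov_pmf_def markov_approx_def split_paired_All prod.case
    by (simp add: mult_eq_iff_eq_divide_if_le)
qed

lemma sum_markov_approx:
  fixes r :: "('u \<times> 'v \<times> 'w) pmf"
  assumes "finite (set_pmf r)"
  defines "A \<equiv> (\<lambda>(a, b, c). a) ` set_pmf r" and "B \<equiv> (\<lambda>(a, b, c). b) ` set_pmf r"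
    and "C \<equiv> (\<lambda>(a, b, c). c) ` set_pmf r"
  shows "sum (markov_approx r) (A \<times> B \<times> C) = 1"
proof -
  let ?Pab = "pmf (map_pmf (\<lambda>(a, b, c). (a, b)) r)" and ?Pbc = "pmf (map_pmf (\<lambda>(a, b, c). (b, c)) r)"
  let ?Pb = "pmf (map_pmf (\<lambda>(a, b, c). b) r)"
  have fin: "finite A" "finite B" "finite C" using assms(1) unfolding A_def B_def C_def by auto
  have "(\<Sum>a\<in>A. \<Sum>c\<in>C. markov_approx r (a, b, c)) = ?Pb b" if "b \<in> B" for b
  proof -
    have "?Pb b > 0" using that unfolding B_def by (auto simp: pmf_positive)
    moreover have "(\<Sum>a\<in>A. ?Pab (a, b)) = ?Pb b"
    proof -
      have "fst ` set_pmf (map_pmf (\<lambda>(a, b, c). (a, b)) r) \<subseteq> A"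
        unfolding A_def by (auto simp: image_image case_prod_beta')
      then have "(\<Sum>a\<in>A. ?Pab (a, b)) = pmf (map_pmf snd (map_pmf (\<lambda>(a, b, c). (a, b)) r)) b"
        by (rule sum_pmf_fst_eq_pmf_map_snd[OF fin(1)])
      also have "map_pmf snd (map_pmf (\<lambda>(a, b, c). (a, b)) r) = map_pmf (\<lambda>(a, b, c). b) r"
        by (simp add: map_pmf_comp case_prod_beta')
      finally show ?thesis .
    qed
    moreover have "(\<Sum>c\<in>C. ?Pbc (b, c)) = ?Pb b"
    proof -
      have "snd ` set_pmf (map_pmf (\<lambda>(a, b, c). (b, c)) r) \<subseteq> C"
        unfolding C_def by (auto simp: image_image case_prod_beta')
      then have "(\<Sum>c\<in>C. ?Pbc (b, c)) = pmf (map_pmf fst (map_pmf (\<lambda>(a, b, c). (b, c)) r)) b"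
        by (rule sum_pmf_snd_eq_pmf_map_fst[OF fin(3)])
      also have "map_pmf fst (map_pmf (\<lambda>(a, b, c). (b, c)) r) = map_pmf (\<lambda>(a, b, c). b) r"
        by (simp add: map_pmf_comp case_prod_beta')
      finally show ?thesis .
    qed
    ultimately show ?thesis
      unfolding markov_approx_def by (simp add: sum_product[symmetric] sum_divide_distrib[symmetric])
  qed
  then have "(\<Sum>b\<in>B. \<Sum>a\<in>A. \<Sum>c\<in>C. markov_approx r (a, b, c)) = (\<Sum>b\<in>B. ?Pb b)"
    by (rule sum.cong[OF refl])
  moreover have "sum (markov_approx r) (A \<times> B \<times> C) = (\<Sum>a\<in>A. \<Sum>b\<in>B. \<Sum>c\<in>C. markov_approx r (a, b, c))"
    by (simp add: sum.cartesian_product case_prod_beta')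
  ultimately have "sum (markov_approx r) (A \<times> B \<times> C) = (\<Sum>b\<in>B. ?Pb b)"
    by (simp add: sum.swap[of _ A])
  also have "\<dots> = 1" using fin by (intro sum_pmf_eq_1) (auto simp: B_def)
  finally show ?thesis .
qed

lemma markov_approx_eq_0:
  assumes "(a, b, c) \<notin> (\<lambda>(a, b, c). a) ` set_pmf r \<times> (\<lambda>(a, b, c). b) ` set_pmf r \<times> (\<lambda>(a, b, c). c) ` set_pmf r"
  shows "markov_approx r (a, b, c) = 0"
proof -
  have "(a, b) \<notin> set_pmf (map_pmf (\<lambda>(a, b, c). (a, b)) r) \<or> (b, c) \<notin> set_pmf (map_pmf (\<lambda>(a, b, c). (b, c)) r)
        \<or> b \<notin> set_pmf (map_pmf (\<lambda>(a, b, c). b) r)"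
    using assms by force
  then have "pmf (map_pmf (\<lambda>(a, b, c). (a, b)) r) (a, b) = 0 \<or> pmf (map_pmf (\<lambda>(a, b, c). (b, c)) r) (b, c) = 0
        \<or> pmf (map_pmf (\<lambda>(a, b, c). b) r) b = 0"
    by (simp only: set_pmf_iff not_not)
  then show ?thesis unfolding markov_approx_def by auto
qed

text \<open>The conditional mutual information I(A;C|B) of the law r of (A,B,C), as the relative
  entropy of r with respect to its Markov approximation.\<close>
definition cond_mi_pmf :: "('u \<times> 'v \<times> 'w) pmf \<Rightarrow> real" where
  "cond_mi_pmf r = (\<Sum>z\<in>set_pmf r. pmf r z * log 2 (pmf r z / markov_approx r z))"

lemma cond_mi_pmf_nonneg_and_eq_0:
  fixes r :: "('u \<times> 'v \<times> 'w) pmf"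
  assumes "finite (set_pmf r)"
  shows "cond_mi_pmf r \<ge> 0" and "cond_mi_pmf r = 0 \<Longrightarrow> markov_pmf r"
proof -
  define T where "T = (\<lambda>(a, b, c). a) ` set_pmf r \<times> (\<lambda>(a, b, c). b) ` set_pmf r \<times> (\<lambda>(a, b, c). c) ` set_pmf r"
  have T: "finite T" "set_pmf r \<subseteq> T" "sum (markov_approx r) T = 1"
    using assms sum_markov_approx[OF assms] unfolding T_def by force+
  have S: "sum (pmf r) (set_pmf r) = 1" using assms by (intro sum_pmf_eq_1) auto
  note gibbs = gibbs_inequality[OF T(1,2) _ _ _ S T(3)]
  have ln_form: "cond_mi_pmf r = (\<Sum>z\<in>set_pmf r. pmf r z * ln (pmf r z / markov_approx r z)) / ln 2"
    unfolding cond_mi_pmf_def log_def sum_divide_distrib by simp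
  show "cond_mi_pmf r \<ge> 0"
    unfolding ln_form using gibbs(1) by (simp add: pmf_positive markov_approx_pos markov_approx_nonneg)
  assume "cond_mi_pmf r = 0"
  then have "(\<Sum>z\<in>set_pmf r. pmf r z * ln (pmf r z / markov_approx r z)) = 0"
    unfolding ln_form by simp
  then have "markov_approx r z = pmf r z" if "z \<in> T" for z
    using gibbs(2)[OF _ _ _ _ that] by (simp add: pmf_positive markov_approx_pos markov_approx_nonneg set_pmf_iff)
  moreover have "markov_approx r z = pmf r z" if "z \<notin> T" for z
    using that T(2) markov_approx_eq_0[of "fst z" "fst (snd z)" "snd (snd z)" r]
    by (auto simp: T_def set_pmf_iff)
  ultimately show "markov_pmf r" unfolding markov_pmf_iff_markov_approx by metis
qed

lemma markov_pmf_iff_cond_mi_pmf_eq_0: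
  assumes "finite (set_pmf r)"
  shows "markov_pmf r \<longleftrightarrow> cond_mi_pmf r = 0"
proof
  assume "markov_pmf r"
  then have "pmf r z = markov_approx r z" for z unfolding markov_pmf_iff_markov_approx by blast
  then show "cond_mi_pmf r = 0"
    unfolding cond_mi_pmf_def by (intro sum.neutral ballI) (simp add: markov_approx_pos)
qed (rule cond_mi_pmf_nonneg_and_eq_0(2)[OF assms])

lemma cond_mi_pmf_map_pmf:
  assumes "finite (set_pmf M)"
  shows "cond_mi_pmf (map_pmf (\<lambda>x. (u x, v x, w x)) M) = (\<Sum>x\<in>set_pmf M. pmf M x *
     log 2 (fiber_prob M (\<lambda>x. (u x, v x, w x)) x * fiber_prob M v x /
       (fiber_prob M (\<lambda>x. (u x, v x)) x * fiber_prob M (\<lambda>x. (v x, w x)) x)))"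
proof -
  let ?g = "\<lambda>x. (u x, v x, w x)"
  have "pmf (map_pmf ?g M) (?g x) = fiber_prob M ?g x" for x by (simp add: fiber_prob_def)
  moreover have "markov_approx (map_pmf ?g M) (?g x) =
      fiber_prob M (\<lambda>x. (u x, v x)) x * fiber_prob M (\<lambda>x. (v x, w x)) x / fiber_prob M v x" for x
    by (simp add: markov_approx_def fiber_prob_def map_pmf_comp)
  ultimately show ?thesis
    unfolding cond_mi_pmf_def sum_set_pmf_map_pmf[OF assms] by (simp add: divide_divide_eq_right)
qed

lemma mi_pmf_chain_rule:
  assumes "finite (set_pmf M)"
  shows "mi_pmf (map_pmf (\<lambda>x. ((u x, v x), w x)) M) =
         mi_pmf (map_pmf (\<lambda>x. (v x, w x)) M) + cond_mi_pmf (map_pmf (\<lambda>x. (u x, v x, w x)) M)"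
  unfolding mi_pmf_map_pmf[OF assms] cond_mi_pmf_map_pmf[OF assms] sum.distrib[symmetric]
proof (rule sum.cong[OF refl])
  fix x assume x: "x \<in> set_pmf M"
  let ?P = "fiber_prob M"
  have uvw: "?P (\<lambda>x. ((u x, v x), w x)) x = ?P (\<lambda>x. (u x, v x, w x)) x" by (rule fiber_prob_cong) auto
  have pos: "?P (\<lambda>x. (u x, v x, w x)) x > 0" "?P (\<lambda>x. (u x, v x)) x > 0" "?P (\<lambda>x. (v x, w x)) x > 0"
    "?P v x > 0" "?P w x > 0" using x by (simp_all add: fiber_prob_pos)
  have "?P (\<lambda>x. (u x, v x, w x)) x / (?P (\<lambda>x. (u x, v x)) x * ?P w x) =
        ?P (\<lambda>x. (v x, w x)) x / (?P v x * ?P w x) *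
          (?P (\<lambda>x. (u x, v x, w x)) x * ?P v x / (?P (\<lambda>x. (u x, v x)) x * ?P (\<lambda>x. (v x, w x)) x))"
    using pos by (simp add: field_simps)
  then have "log 2 (?P (\<lambda>x. (u x, v x, w x)) x / (?P (\<lambda>x. (u x, v x)) x * ?P w x)) =
        log 2 (?P (\<lambda>x. (v x, w x)) x / (?P v x * ?P w x) *
          (?P (\<lambda>x. (u x, v x, w x)) x * ?P v x / (?P (\<lambda>x. (u x, v x)) x * ?P (\<lambda>x. (v x, w x)) x)))"
    by (rule arg_cong)
  also have "\<dots> = log 2 (?P (\<lambda>x. (v x, w x)) x / (?P v x * ?P w x)) +
          log 2 (?P (\<lambda>x. (u x, v x, w x)) x * ?P v x / (?P (\<lambda>x. (u x, v x)) x * ?P (\<lambda>x. (v x, w x)) x))"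
    using pos by (intro log_mult_pos) simp_all
  finally show "pmf M x * log 2 (?P (\<lambda>x. ((u x, v x), w x)) x /
        (?P (\<lambda>y. fst ((u y, v y), w y)) x * ?P (\<lambda>y. snd ((u y, v y), w y)) x)) =
      pmf M x * log 2 (?P (\<lambda>x. (v x, w x)) x / (?P (\<lambda>y. fst (v y, w y)) x * ?P (\<lambda>y. snd (v y, w y)) x)) +
      pmf M x * log 2 (?P (\<lambda>x. (u x, v x, w x)) x * ?P v x / (?P (\<lambda>x. (u x, v x)) x * ?P (\<lambda>x. (v x, w x)) x))"
    unfolding uvw by (simp add: distrib_left)
qed

lemma cond_mi_pmf_relabel_fst:
  assumes "finite (set_pmf M)" and "inj_on e (u ` set_pmf M)"
  shows "cond_mi_pmf (map_pmf (\<lambda>x. (e (u x), v x, w x)) M) = cond_mi_pmf (map_pmf (\<lambda>x. (u x, v x, w x)) M)"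
  unfolding cond_mi_pmf_map_pmf[OF assms(1)]
proof (rule sum.cong[OF refl])
  fix x assume "x \<in> set_pmf M"
  then have "fiber_prob M (\<lambda>x. (e (u x), v x, w x)) x = fiber_prob M (\<lambda>x. (u x, v x, w x)) x"
    and "fiber_prob M (\<lambda>x. (e (u x), v x)) x = fiber_prob M (\<lambda>x. (u x, v x)) x"
    using assms(2) by (auto intro!: fiber_prob_cong simp: inj_on_def)
  then show "pmf M x * log 2 (fiber_prob M (\<lambda>x. (e (u x), v x, w x)) x * fiber_prob M v x /
       (fiber_prob M (\<lambda>x. (e (u x), v x)) x * fiber_prob M (\<lambda>x. (v x, w x)) x)) =
     pmf M x * log 2 (fiber_prob M (\<lambda>x. (u x, v x, w x)) x * fiber_prob M v x /
       (fiber_prob M (\<lambda>x. (u x, v x)) x * fiber_prob M (\<lambda>x. (v x, w x)) x))"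
    by simp
qed

lemma markov_pmf_relabel_fst:
  assumes "finite (set_pmf M)" "inj_on e (u ` set_pmf M)" "markov_pmf (map_pmf (\<lambda>x. (u x, v x, w x)) M)"
  shows "markov_pmf (map_pmf (\<lambda>x. (e (u x), v x, w x)) M)"
  using assms by (simp add: markov_pmf_iff_cond_mi_pmf_eq_0 cond_mi_pmf_relabel_fst)

lemma markov_pmf_fun_of_middle:
  assumes "finite (set_pmf M)"
  shows "markov_pmf (map_pmf (\<lambda>x. (g (v x), v x, w x)) M)"
proof -
  have "finite (set_pmf (map_pmf (\<lambda>x. (g (v x), v x, w x)) M))" using assms by simp
  moreover have "cond_mi_pmf (map_pmf (\<lambda>x. (g (v x), v x, w x)) M) = 0"
    unfolding cond_mi_pmf_map_pmf[OF assms]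
  proof (rule sum.neutral, intro ballI)
    fix x assume x: "x \<in> set_pmf M"
    have "fiber_prob M (\<lambda>x. (g (v x), v x, w x)) x = fiber_prob M (\<lambda>x. (v x, w x)) x"
      and "fiber_prob M (\<lambda>x. (g (v x), v x)) x = fiber_prob M v x"
      by (auto intro!: fiber_prob_cong)
    moreover have "fiber_prob M v x > 0" "fiber_prob M (\<lambda>x. (v x, w x)) x > 0"
      using x by (simp_all add: fiber_prob_pos)
    ultimately show "pmf M x * log 2 (fiber_prob M (\<lambda>x. (g (v x), v x, w x)) x * fiber_prob M v x /
         (fiber_prob M (\<lambda>x. (g (v x), v x)) x * fiber_prob M (\<lambda>x. (v x, w x)) x)) = 0"
      by simp
  qed
  ultimately show ?thesis by (simp add: markov_pmf_iff_cond_mi_pmf_eq_0)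
qed

lemma mi_pmf_data_processing:
  assumes "finite (set_pmf M)" and "markov_pmf (map_pmf (\<lambda>x. (t x, a x, c x)) M)"
  shows "mi_pmf (map_pmf (\<lambda>x. (t x, c x)) M) \<le> mi_pmf (map_pmf (\<lambda>x. (a x, c x)) M)"
proof -
  have "mi_pmf (map_pmf (\<lambda>x. ((a x, t x), c x)) M) = mi_pmf (map_pmf (\<lambda>x. ((t x, a x), c x)) M)"
    using mi_pmf_relabel_fst[OF assms(1), of prod.swap "\<lambda>x. (t x, a x)" c] by simp
  also have "\<dots> = mi_pmf (map_pmf (\<lambda>x. (a x, c x)) M)"
    using mi_pmf_chain_rule[OF assms(1), of t a c] assms
    by (simp add: markov_pmf_iff_cond_mi_pmf_eq_0)
  finally show ?thesis
    using mi_pmf_chain_rule[OF assms(1), of a t c] cond_mi_pmf_nonneg_and_eq_0(1)[of "map_pmf (\<lambda>x. (a x, t x, c x)) M"] assms(1)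
    by simp
qed

section \<open>Sufficient conditions for Markov chains\<close>

lemma markov_pmf_if_mi_pmf_eq:
  fixes p :: "('a \<times> 'b \<times> 'c) pmf"
  assumes fin: "finite (set_pmf p)"
    and eq: "mi_pmf (map_pmf (\<lambda>(a, b, c). ((a, b), c)) p) = mi_pmf (map_pmf (\<lambda>(a, b, c). (b, c)) p)"
  shows "markov_pmf p"
proof -
  have "mi_pmf (map_pmf (\<lambda>(a, b, c). ((a, b), c)) p) = mi_pmf (map_pmf (\<lambda>(a, b, c). (b, c)) p) + cond_mi_pmf p"
    using mi_pmf_chain_rule[OF fin, of fst "\<lambda>x. fst (snd x)" "\<lambda>x. snd (snd x)"]
    by (simp add: case_prod_beta' map_pmf_ident)
  with eq fin show ?thesis by (simp add: markov_pmf_iff_cond_mi_pmf_eq_0)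
qed

lemma fiber_prob_pair_le: "fiber_prob M (\<lambda>x. (f x, g x)) x \<le> fiber_prob M g x"
  unfolding fiber_prob_eq_measure by (rule measure_pmf.finite_measure_mono) auto

text \<open>If f is almost surely determined on the g-fibre of x, it stays so on every finer fibre.\<close>
lemma fiber_prob_triple_eq_if_pair_eq:
  assumes "fiber_prob M (\<lambda>x. (f x, g x)) x = fiber_prob M g x"
  shows "fiber_prob M (\<lambda>x. (f x, g x, h x)) x = fiber_prob M (\<lambda>x. (g x, h x)) x"
proof -
  let ?\<mu> = "measure_pmf.prob M"
  define E where "E = {y. f y = f x \<and> g y = g x}"
  define F where "F = {y. g y = g x}"
  have "?\<mu> (F - E) = ?\<mu> F - ?\<mu> E"
    by (rule measure_pmf.finite_measure_Diff) (auto simp: E_def F_def)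
  then have null: "?\<mu> (F - E) = 0" using assms unfolding fiber_prob_eq_measure E_def F_def by simp
  have "?\<mu> {y. g y = g x \<and> h y = h x} \<le> ?\<mu> ({y. f y = f x \<and> g y = g x \<and> h y = h x} \<union> (F - E))"
    by (rule measure_pmf.finite_measure_mono) (auto simp: E_def F_def)
  also have "\<dots> \<le> ?\<mu> {y. f y = f x \<and> g y = g x \<and> h y = h x} + ?\<mu> (F - E)"
    by (rule measure_Un_le) auto
  finally have "?\<mu> {y. g y = g x \<and> h y = h x} \<le> ?\<mu> {y. f y = f x \<and> g y = g x \<and> h y = h x}"
    using null by simp
  moreover have "?\<mu> {y. f y = f x \<and> g y = g x \<and> h y = h x} \<le> ?\<mu> {y. g y = g x \<and> h y = h x}"
    by (rule measure_pmf.finite_measure_mono) auto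
  ultimately show ?thesis unfolding fiber_prob_eq_measure by simp
qed

lemma fiber_prob_pair_eq_if_cond_entropy_eq_0:
  assumes fin: "finite (set_pmf M)"
    and H0: "cond_entropy_pmf (map_pmf (\<lambda>x. (f x, g x)) M) = 0" and x: "x \<in> set_pmf M"
  shows "fiber_prob M (\<lambda>x. (f x, g x)) x = fiber_prob M g x"
proof -
  let ?d = "\<lambda>x. pmf M x * (log 2 (fiber_prob M g x) - log 2 (fiber_prob M (\<lambda>x. (f x, g x)) x))"
  have "cond_entropy_pmf (map_pmf (\<lambda>x. (f x, g x)) M) =
      (\<Sum>x\<in>set_pmf M. pmf M x * log 2 (fiber_prob M g x))
      - (\<Sum>x\<in>set_pmf M. pmf M x * log 2 (fiber_prob M (\<lambda>x. (f x, g x)) x))"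
    unfolding cond_entropy_pmf_def map_pmf_comp entropy_pmf_map_pmf[OF fin] by simp
  also have "\<dots> = sum ?d (set_pmf M)"
    unfolding sum_subtractf[symmetric] right_diff_distrib ..
  finally have "cond_entropy_pmf (map_pmf (\<lambda>x. (f x, g x)) M) = sum ?d (set_pmf M)" .
  moreover have d_nonneg: "?d y \<ge> 0" if "y \<in> set_pmf M" for y
  proof -
    have "0 < fiber_prob M (\<lambda>x. (f x, g x)) y" using that by (rule fiber_prob_pos)
    then have "log 2 (fiber_prob M (\<lambda>x. (f x, g x)) y) \<le> log 2 (fiber_prob M g y)"
      using fiber_prob_pair_le[of M f g y] by simp
    then show ?thesis by simp
  qed
  ultimately have "sum ?d (set_pmf M) = 0" using H0 by simp
  then have "?d x = 0" using d_nonneg fin x by (simp add: sum_nonneg_eq_0_iff)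
  then have "log 2 (fiber_prob M g x) = log 2 (fiber_prob M (\<lambda>x. (f x, g x)) x)"
    using x by (simp add: set_pmf_iff)
  moreover have "0 < fiber_prob M (\<lambda>x. (f x, g x)) x" "0 < fiber_prob M g x"
    using x by (simp_all add: fiber_prob_pos)
  ultimately show ?thesis using log_inj[of 2] by (simp add: inj_on_def)
qed

lemma markov_pmf_if_cond_entropy_eq_0:
  fixes p :: "('a \<times> 'b \<times> 'c) pmf"
  assumes fin: "finite (set_pmf p)"
    and H0: "cond_entropy_pmf (map_pmf (\<lambda>(a, b, c). (a, b)) p) = 0"
  shows "markov_pmf p"
proof -
  let ?a = fst and ?b = "\<lambda>x. fst (snd x)" and ?c = "\<lambda>x. snd (snd x)"
  have ab: "fiber_prob p (\<lambda>x. (?a x, ?b x)) x = fiber_prob p ?b x" if "x \<in> set_pmf p" for x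
    using fiber_prob_pair_eq_if_cond_entropy_eq_0[OF fin _ that, of ?a ?b] H0
    by (simp add: case_prod_beta')
  have "cond_mi_pmf (map_pmf (\<lambda>x. (?a x, ?b x, ?c x)) p) = 0"
    unfolding cond_mi_pmf_map_pmf[OF fin]
  proof (intro sum.neutral ballI)
    fix x assume x: "x \<in> set_pmf p"
    have "fiber_prob p (\<lambda>x. (?a x, ?b x, ?c x)) x = fiber_prob p (\<lambda>x. (?b x, ?c x)) x"
      by (rule fiber_prob_triple_eq_if_pair_eq[OF ab[OF x]])
    moreover have "fiber_prob p ?b x > 0" "fiber_prob p (\<lambda>x. (?b x, ?c x)) x > 0"
      using x by (simp_all add: fiber_prob_pos)
    ultimately show "pmf p x * log 2 (fiber_prob p (\<lambda>x. (?a x, ?b x, ?c x)) x * fiber_prob p ?b x /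
        (fiber_prob p (\<lambda>x. (?a x, ?b x)) x * fiber_prob p (\<lambda>x. (?b x, ?c x)) x)) = 0"
      using ab[OF x] by simp
  qed
  then show ?thesis using fin by (simp add: markov_pmf_iff_cond_mi_pmf_eq_0 map_pmf_ident)
qed

section \<open>The intersection information\<close>

definition Icap2_feasible :: "('a \<times> 'b \<times> 'c) pmf \<Rightarrow> (nat \<times> 'a \<times> 'b \<times> 'c) pmf set" where
  "Icap2_feasible p = {q. finite (set_pmf q) \<and> map_pmf snd q = p \<and>
        markov_pmf (map_pmf (\<lambda>(t, a, b, c). (t, a, c)) q) \<and>
        markov_pmf (map_pmf (\<lambda>(t, a, b, c). (t, b, c)) q)}"

definition mi_Q_Y :: "(nat \<times> 'a \<times> 'b \<times> 'c) pmf \<Rightarrow> real" where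
  "mi_Q_Y q = mi_pmf (map_pmf (\<lambda>(t, a, b, c). (t, c)) q)"

lemma Icap2_eq_SUP: "Icap2 p = (SUP q\<in>Icap2_feasible p. mi_Q_Y q)"
  unfolding Icap2_def Icap2_feasible_def mi_Q_Y_def ..

lemma mi_Q_Y_le_mi_pmf:
  assumes "q \<in> Icap2_feasible p"
  shows "mi_Q_Y q \<le> mi_pmf (map_pmf (\<lambda>(a, b, c). (a, c)) p)"
proof -
  have fin: "finite (set_pmf q)" and qp: "map_pmf snd q = p"
    and mk: "markov_pmf (map_pmf (\<lambda>x. (fst x, fst (snd x), snd (snd (snd x)))) q)"
    using assms unfolding Icap2_feasible_def by (auto simp: case_prod_beta')
  have "mi_pmf (map_pmf (\<lambda>x. (fst x, snd (snd (snd x)))) q) \<le>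
        mi_pmf (map_pmf (\<lambda>x. (fst (snd x), snd (snd (snd x)))) q)"
    by (rule mi_pmf_data_processing[OF fin mk])
  then show ?thesis unfolding mi_Q_Y_def qp[symmetric] by (simp add: map_pmf_comp case_prod_beta')
qed

lemma bdd_above_mi_Q_Y: "bdd_above (mi_Q_Y ` Icap2_feasible p)"
  using mi_Q_Y_le_mi_pmf by (intro bdd_aboveI2) blast

lemma const_mem_Icap2_feasible:
  assumes "finite (set_pmf p)"
  shows "map_pmf (Pair 0) p \<in> Icap2_feasible p" and "mi_Q_Y (map_pmf (Pair 0) p) = 0"
proof -
  have "markov_pmf (map_pmf (\<lambda>x. ((\<lambda>_. 0::nat) (fst x), fst x, snd (snd x))) p)"
    and "markov_pmf (map_pmf (\<lambda>x. ((\<lambda>_. 0::nat) (fst (snd x)), fst (snd x), snd (snd x))) p)"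
    using assms by (rule markov_pmf_fun_of_middle)+
  then show "map_pmf (Pair 0) p \<in> Icap2_feasible p"
    using assms unfolding Icap2_feasible_def by (simp add: map_pmf_comp case_prod_beta' map_pmf_ident)
  have "pmf (map_pmf (\<lambda>x. (0::nat, snd (snd x))) p) (0, c) = pmf (map_pmf (\<lambda>x. snd (snd x)) p) c" for c
    using pmf_map_inj'[of "Pair (0::nat)" "map_pmf (\<lambda>x. snd (snd x)) p" c] by (simp add: map_pmf_comp inj_def)
  then have "mi_pmf (map_pmf (\<lambda>x. (0::nat, snd (snd x))) p) = 0"
    using assms by (intro mi_pmf_eq_0_if_indep) (auto simp: map_pmf_comp)
  then show "mi_Q_Y (map_pmf (Pair 0) p) = 0"
    unfolding mi_Q_Y_def by (simp add: map_pmf_comp case_prod_beta')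
qed

lemma Icap2_nonneg: "finite (set_pmf p) \<Longrightarrow> Icap2 p \<ge> 0"
  unfolding Icap2_eq_SUP using const_mem_Icap2_feasible
  by (metis bdd_above_mi_Q_Y cSUP_upper2 order_refl)

lemma Icap2_le_mi_pmf: "finite (set_pmf p) \<Longrightarrow> Icap2 p \<le> mi_pmf (map_pmf (\<lambda>(a, b, c). (a, c)) p)"
  unfolding Icap2_eq_SUP using const_mem_Icap2_feasible(1) mi_Q_Y_le_mi_pmf
  by (intro cSUP_least) auto

lemma Icap2_le_Icap2_swap:
  assumes "finite (set_pmf p)"
  shows "Icap2 p \<le> Icap2 (map_pmf (\<lambda>(a, b, c). (b, a, c)) p)"
  unfolding Icap2_eq_SUP
proof (rule cSUP_mono[OF _ bdd_above_mi_Q_Y])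
  show "Icap2_feasible p \<noteq> {}" using const_mem_Icap2_feasible(1)[OF assms] by blast
next
  fix q assume q: "q \<in> Icap2_feasible p"
  let ?q' = "map_pmf (\<lambda>(t, a, b, c). (t, b, a, c)) q"
  have "?q' \<in> Icap2_feasible (map_pmf (\<lambda>(a, b, c). (b, a, c)) p)" and "mi_Q_Y ?q' = mi_Q_Y q"
    using q unfolding Icap2_feasible_def mi_Q_Y_def by (auto simp: map_pmf_comp case_prod_beta')
  then show "\<exists>q'\<in>Icap2_feasible (map_pmf (\<lambda>(a, b, c). (b, a, c)) p). mi_Q_Y q \<le> mi_Q_Y q'"
    by (metis order_refl)
qed

lemma Icap2_swap:
  assumes "finite (set_pmf p)"
  shows "Icap2 p = Icap2 (map_pmf (\<lambda>(a, b, c). (b, a, c)) p)"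
proof -
  have "map_pmf (\<lambda>(a, b, c). (b, a, c)) (map_pmf (\<lambda>(a, b, c). (b, a, c)) p) = p"
    by (simp add: map_pmf_comp case_prod_beta' map_pmf_ident)
  then show ?thesis
    using Icap2_le_Icap2_swap[OF assms] Icap2_le_Icap2_swap[of "map_pmf (\<lambda>(a, b, c). (b, a, c)) p"] assms
    by simp
qed

text \<open>The witness Q is X1, relabelled injectively into nat.\<close>
lemma mi_pmf_le_Icap2_if_markov:
  fixes p :: "('a \<times> 'b \<times> 'c) pmf"
  assumes fin: "finite (set_pmf p)" and mk: "markov_pmf p"
  shows "mi_pmf (map_pmf (\<lambda>(a, b, c). (a, c)) p) \<le> Icap2 p"
proof -
  obtain e :: "'a \<Rightarrow> nat" where e: "inj_on e (fst ` set_pmf p)"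
    using fin finite_imp_inj_to_nat_seg[of "fst ` set_pmf p"] by auto
  let ?q = "map_pmf (\<lambda>(a, b, c). (e a, a, b, c)) p"
  have "markov_pmf (map_pmf (\<lambda>x. (e (fst x), fst x, snd (snd x))) p)"
    using fin by (rule markov_pmf_fun_of_middle)
  moreover have "markov_pmf (map_pmf (\<lambda>x. (e (fst x), fst (snd x), snd (snd x))) p)"
    using markov_pmf_relabel_fst[OF fin e, of "\<lambda>x. fst (snd x)" "\<lambda>x. snd (snd x)"] mk
    by (simp add: map_pmf_ident)
  ultimately have "?q \<in> Icap2_feasible p"
    using fin unfolding Icap2_feasible_def by (simp add: map_pmf_comp case_prod_beta' map_pmf_ident)
  moreover have "mi_Q_Y ?q = mi_pmf (map_pmf (\<lambda>(a, b, c). (a, c)) p)"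
    using mi_pmf_relabel_fst[OF fin e, of "\<lambda>x. snd (snd x)"]
    unfolding mi_Q_Y_def by (simp add: map_pmf_comp case_prod_beta')
  ultimately show ?thesis unfolding Icap2_eq_SUP by (intro cSUP_upper2[OF bdd_above_mi_Q_Y, of ?q]) simp_all
qed

lemma Icap1_eq_mi_pmf:
  fixes p :: "('a \<times> 'c) pmf"
  assumes fin: "finite (set_pmf p)"
  shows "Icap1 p = mi_pmf p"
  unfolding Icap1_def
proof (rule cSup_eq_maximum)
  obtain e :: "'a \<Rightarrow> nat" where e: "inj_on e (fst ` set_pmf p)"
    using fin finite_imp_inj_to_nat_seg[of "fst ` set_pmf p"] by auto
  let ?q = "map_pmf (\<lambda>x. (e (fst x), fst x, snd x)) p"
  have "markov_pmf ?q" using fin by (rule markov_pmf_fun_of_middle)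
  then have "?q \<in> {q. finite (set_pmf q) \<and> map_pmf snd q = p \<and> markov_pmf q}"
    using fin by (simp add: map_pmf_comp map_pmf_ident)
  moreover have "mi_pmf p = mi_pmf (map_pmf (\<lambda>(t, a, c). (t, c)) ?q)"
    using mi_pmf_relabel_fst[OF fin e, of snd] by (simp add: map_pmf_comp map_pmf_ident case_prod_beta')
  ultimately show "mi_pmf p \<in> (\<lambda>q. mi_pmf (map_pmf (\<lambda>(t, a, c). (t, c)) q)) `
      {q :: (nat \<times> 'a \<times> 'c) pmf. finite (set_pmf q) \<and> map_pmf snd q = p \<and> markov_pmf q}"
    by (rule rev_image_eqI)
next
  fix y assume "y \<in> (\<lambda>q. mi_pmf (map_pmf (\<lambda>(t, a, c). (t, c)) q)) `
      {q :: (nat \<times> 'a \<times> 'c) pmf. finite (set_pmf q) \<and> map_pmf snd q = p \<and> markov_pmf q}"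
  then obtain q :: "(nat \<times> 'a \<times> 'c) pmf" where y: "y = mi_pmf (map_pmf (\<lambda>(t, a, c). (t, c)) q)"
    and q: "finite (set_pmf q)" "map_pmf snd q = p" "markov_pmf q" by blast
  have "mi_pmf (map_pmf (\<lambda>x. (fst x, snd (snd x))) q) \<le> mi_pmf (map_pmf (\<lambda>x. (fst (snd x), snd (snd x))) q)"
    using q by (intro mi_pmf_data_processing) (simp_all add: map_pmf_ident)
  then show "y \<le> mi_pmf p" unfolding y q(2)[symmetric] by (simp add: case_prod_beta' map_pmf_comp)
qed

section \<open>The counterexample\<close>

lemma pmf_map_fst_snd_eq_sum:
  assumes "finite Y" "snd ` set_pmf q \<subseteq> Y"
  shows "pmf (map_pmf (\<lambda>x. (fst x, h (snd x))) q) (t, z) = (\<Sum>y\<in>Y. if h y = z then pmf q (t, y) else 0)"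
proof -
  have "pmf (map_pmf (\<lambda>x. (fst x, h (snd x))) q) (t, z) = measure q ({x. fst x = t \<and> h (snd x) = z} \<inter> set_pmf q)"
    by (simp add: pmf_map vimage_def measure_Int_set_pmf)
  also have "{x. fst x = t \<and> h (snd x) = z} \<inter> set_pmf q = Pair t ` {y \<in> Y. h y = z} \<inter> set_pmf q"
    using assms(2) by force
  also have "measure q \<dots> = sum (pmf q) (Pair t ` {y \<in> Y. h y = z})"
    using assms(1) by (simp add: measure_Int_set_pmf measure_measure_pmf_finite)
  also have "\<dots> = (\<Sum>y\<in>{y \<in> Y. h y = z}. pmf q (t, y))"
    by (subst sum.reindex) (auto simp: inj_on_def)
  also have "\<dots> = (\<Sum>y\<in>Y. if h y = z then pmf q (t, y) else 0)"
    using assms(1) by (rule sum.inter_filter)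
  finally show ?thesis .
qed

definition three_point_pmf :: "(nat \<times> nat) pmf" where
  "three_point_pmf = pmf_of_set {(0, 0), (0, 1), (1, 1)}"

lemma set_three_point_pmf: "set_pmf three_point_pmf = {(0, 0), (0, 1), (1, 1)}"
  unfolding three_point_pmf_def by (simp add: set_pmf_of_set)

lemma pmf_map_three_point_pmf:
  "pmf (map_pmf f three_point_pmf) z = (\<Sum>x\<in>{(0, 0), (0, 1), (1, 1)}. if f x = z then 1 / 3 else 0)"
proof -
  have "pmf (map_pmf f three_point_pmf) z = card ({(0::nat, 0::nat), (0, 1), (1, 1)} \<inter> f -` {z}) / 3"
    unfolding three_point_pmf_def pmf_map by (subst measure_pmf_of_set) auto
  also have "\<dots> = (\<Sum>x\<in>{(0::nat, 0::nat), (0, 1), (1, 1)}. if f x = z then 1 / 3 else 0)"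
    by (simp add: sum.If_cases vimage_def Int_def)
  finally show ?thesis .
qed

lemma pmf_map_snd_eq_three_point_sum:
  assumes "map_pmf snd q = map_pmf (\<lambda>(a, b). (a, b, g (a, b))) three_point_pmf"
  shows "pmf (map_pmf (\<lambda>x. f (snd x)) q) z =
    (\<Sum>x\<in>{(0, 0), (0, 1), (1, 1)}. if f (fst x, snd x, g x) = z then 1 / 3 else 0)"
proof -
  have "map_pmf (\<lambda>x. f (snd x)) q = map_pmf f (map_pmf snd q)" by (simp add: map_pmf_comp)
  also have "\<dots> = map_pmf (\<lambda>x. f (fst x, snd x, g x)) three_point_pmf"
    unfolding assms by (simp add: map_pmf_comp case_prod_beta')
  finally show ?thesis by (simp add: pmf_map_three_point_pmf)
qed

lemma snd_set_pmf_three_point: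
  assumes "map_pmf snd q = map_pmf (\<lambda>(a, b). (a, b, g (a, b))) three_point_pmf"
  shows "snd ` set_pmf q \<subseteq> {(0, 0, g (0, 0)), (0, 1, g (0, 1)), (1, 1, g (1, 1))}"
proof -
  have "snd ` set_pmf q = set_pmf (map_pmf snd q)" by simp
  then show ?thesis unfolding assms by (auto simp: set_three_point_pmf)
qed

lemma pmf_Icap2_feasible_three_point_uniform:
  fixes g :: "nat \<times> nat \<Rightarrow> 'c"
  assumes "distinct [g (0, 0), g (0, 1), g (1, 1)]"
    and q: "q \<in> Icap2_feasible (map_pmf (\<lambda>(a, b). (a, b, g (a, b))) three_point_pmf)"
  shows "pmf q (t, (0, 0, g (0, 0))) = pmf q (t, (1, 1, g (1, 1)))"
    and "pmf q (t, (0, 1, g (0, 1))) = pmf q (t, (1, 1, g (1, 1)))"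
proof -
  have qp: "map_pmf snd q = map_pmf (\<lambda>(a, b). (a, b, g (a, b))) three_point_pmf"
    and mk1: "markov_pmf (map_pmf (\<lambda>(t, a, b, c). (t, a, c)) q)"
    and mk2: "markov_pmf (map_pmf (\<lambda>(t, a, b, c). (t, b, c)) q)"
    using q unfolding Icap2_feasible_def by auto
  have g: "g (0, 0) \<noteq> g (0, 1)" "g (0, 0) \<noteq> g (1, 1)" "g (0, 1) \<noteq> g (1, 1)"
    using assms(1) by auto
  note joint = pmf_map_fst_snd_eq_sum[OF _ snd_set_pmf_three_point[OF qp], simplified]
  note marg = pmf_map_snd_eq_three_point_sum[OF qp]
  let ?\<alpha>0 = "pmf q (t, (0, 0, g (0, 0)))" and ?\<alpha>1 = "pmf q (t, (0, 1, g (0, 1)))"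
    and ?\<alpha>2 = "pmf q (t, (1, 1, g (1, 1)))"
  have chain1: "?\<alpha>0 * (2 / 3) = (?\<alpha>0 + ?\<alpha>1) * (1 / 3)"
    using mk1[unfolded markov_pmf_def, rule_format, of t 0 "g (0, 0)"] g
    by (simp add: map_pmf_comp case_prod_beta' joint[of "\<lambda>y. (fst y, snd (snd y))"]
        joint[of fst] marg[of fst] marg[of "\<lambda>y. (fst y, snd (snd y))"])
  have chain2: "?\<alpha>2 * (2 / 3) = (?\<alpha>1 + ?\<alpha>2) * (1 / 3)"
    using mk2[unfolded markov_pmf_def, rule_format, of t 1 "g (1, 1)"] g
    by (simp add: map_pmf_comp case_prod_beta' joint[of "\<lambda>y. snd y"]
        joint[of "\<lambda>y. fst (snd y)"] marg[of "\<lambda>y. fst (snd y)"] marg[of "\<lambda>y. snd y"])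
  from chain1 chain2 show "?\<alpha>0 = ?\<alpha>2" "?\<alpha>1 = ?\<alpha>2" by (simp_all add: field_simps)
qed

lemma mi_Q_Y_eq_0_if_three_point:
  fixes g :: "nat \<times> nat \<Rightarrow> 'c"
  assumes "distinct [g (0, 0), g (0, 1), g (1, 1)]"
    and q: "q \<in> Icap2_feasible (map_pmf (\<lambda>(a, b). (a, b, g (a, b))) three_point_pmf)"
  shows "mi_Q_Y q = 0"
proof -
  have g: "g (0, 0) \<noteq> g (0, 1)" "g (0, 0) \<noteq> g (1, 1)" "g (0, 1) \<noteq> g (1, 1)"
    using assms(1) by auto
  have fin: "finite (set_pmf q)"
    and qp: "map_pmf snd q = map_pmf (\<lambda>(a, b). (a, b, g (a, b))) three_point_pmf"
    using q unfolding Icap2_feasible_def by auto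
  note supp = snd_set_pmf_three_point[OF qp]
  note uniform = pmf_Icap2_feasible_three_point_uniform[OF assms]
  have "mi_pmf (map_pmf (\<lambda>x. (fst x, snd (snd (snd x)))) q) = 0"
  proof (rule mi_pmf_eq_0_if_indep)
    fix t c assume "(t, c) \<in> set_pmf (map_pmf (\<lambda>x. (fst x, snd (snd (snd x)))) q)"
    then have "c = g (0, 0) \<or> c = g (0, 1) \<or> c = g (1, 1)" using supp by auto
    moreover have "pmf (map_pmf fst q) t = 3 * pmf q (t, (1, 1, g (1, 1)))"
      using sum_pmf_snd_eq_pmf_map_fst[OF _ supp, of t] uniform[of t] g by simp
    ultimately show "pmf (map_pmf (\<lambda>x. (fst x, snd (snd (snd x)))) q) (t, c) =
        pmf (map_pmf fst (map_pmf (\<lambda>x. (fst x, snd (snd (snd x)))) q)) t *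
        pmf (map_pmf snd (map_pmf (\<lambda>x. (fst x, snd (snd (snd x)))) q)) c"
      using uniform[of t] g
      by (auto simp: map_pmf_comp pmf_map_fst_snd_eq_sum[OF _ supp, of "\<lambda>y. snd (snd y)"]
          pmf_map_snd_eq_three_point_sum[OF qp, of "\<lambda>y. snd (snd y)"])
  qed (use fin in simp)
  then show ?thesis unfolding mi_Q_Y_def by (simp add: case_prod_beta')
qed

lemma Icap2_three_point_eq_0:
  fixes g :: "nat \<times> nat \<Rightarrow> 'c"
  assumes "distinct [g (0, 0), g (0, 1), g (1, 1)]"
  shows "Icap2 (map_pmf (\<lambda>(a, b). (a, b, g (a, b))) three_point_pmf) = 0"
proof -
  let ?p = "map_pmf (\<lambda>(a, b). (a, b, g (a, b))) three_point_pmf"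
  have fin: "finite (set_pmf ?p)" by (simp add: set_three_point_pmf)
  have "Icap2 ?p \<le> 0"
    unfolding Icap2_eq_SUP using const_mem_Icap2_feasible(1)[OF fin] mi_Q_Y_eq_0_if_three_point[OF assms]
    by (intro cSUP_least) auto
  with Icap2_nonneg[OF fin] show ?thesis by simp
qed

lemma mi_pmf_map_three_point_pmf:
  "mi_pmf (map_pmf f three_point_pmf) = (\<Sum>x\<in>{(0, 0), (0, 1), (1, 1)}. 1 / 3 *
     log 2 (fiber_prob three_point_pmf f x /
       (fiber_prob three_point_pmf (\<lambda>y. fst (f y)) x * fiber_prob three_point_pmf (\<lambda>y. snd (f y)) x)))"
  by (simp add: mi_pmf_map_pmf set_three_point_pmf three_point_pmf_def)

lemma fiber_prob_three_point_pmf: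
  "fiber_prob three_point_pmf f x = (\<Sum>y\<in>{(0, 0), (0, 1), (1, 1)}. if f y = f x then 1 / 3 else 0)"
  unfolding fiber_prob_def by (rule pmf_map_three_point_pmf)

lemma log2_3_gt: "log 2 3 > (4::real) / 3"
proof -
  have "4 = log 2 ((2::real) ^ 4)" by (subst log_nat_power) auto
  also have "\<dots> < log 2 ((3::real) ^ 3)" by (subst log_less_cancel_iff) auto
  also have "\<dots> = 3 * log 2 3" by (subst log_nat_power) auto
  finally show ?thesis by simp
qed

lemma log2_3_half: "log 2 (3 / 2 :: real) = log 2 3 - 1"
  by (simp add: log_divide)

lemma log2_3_quarter: "log 2 (3 / 4 :: real) = log 2 3 - 2"
proof -
  have "log 2 (4::real) = log 2 (2 ^ 2)" by simp
  also have "\<dots> = 2" by (subst log_nat_power) auto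
  finally show ?thesis by (simp add: log_divide)
qed

lemma mi_three_point_pmf: "mi_pmf three_point_pmf = log 2 3 - 4 / 3"
proof -
  have "mi_pmf three_point_pmf = 2 / 3 * log 2 (3 / 2) + 1 / 3 * log 2 (3 / 4)"
    using mi_pmf_map_three_point_pmf[of "\<lambda>x. x"] by (simp add: map_pmf_ident fiber_prob_three_point_pmf)
  then show ?thesis unfolding log2_3_half log2_3_quarter by (simp add: field_simps)
qed

lemma SI2_three_point_sum_neg: "SI2 (map_pmf (\<lambda>(a, b). (a, b, a + b)) three_point_pmf) < 0"
proof -
  let ?p = "map_pmf (\<lambda>(a, b). (a, b, a + b)) three_point_pmf"
  have "mi_pmf (map_pmf (\<lambda>(a, b, c). ((a, b), c)) ?p) = log 2 3"
    by (simp add: map_pmf_comp mi_pmf_map_three_point_pmf fiber_prob_three_point_pmf case_prod_beta')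
  moreover have "mi_pmf (map_pmf (\<lambda>(a, b, c). (a, c)) ?p) = 2 / 3 * log 2 (3 / 2) + 1 / 3 * log 2 3"
    by (simp add: map_pmf_comp mi_pmf_map_three_point_pmf fiber_prob_three_point_pmf case_prod_beta')
  moreover have "mi_pmf (map_pmf (\<lambda>(a, b, c). (b, c)) ?p) = 2 / 3 * log 2 (3 / 2) + 1 / 3 * log 2 3"
    by (simp add: map_pmf_comp mi_pmf_map_three_point_pmf fiber_prob_three_point_pmf case_prod_beta')
  moreover have "Icap2 ?p = 0"
    using Icap2_three_point_eq_0[of "\<lambda>(a, b). a + b"] by (simp add: case_prod_beta')
  ultimately show ?thesis unfolding SI2_def log2_3_half using log2_3_gt by simp
qed

lemma Icap2_three_point_copy_ne_mi: "Icap2 (map_pmf (\<lambda>(a, b). (a, b, (a, b))) three_point_pmf) \<noteq> mi_pmf three_point_pmf"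
  using Icap2_three_point_eq_0[of "\<lambda>x. x"] mi_three_point_pmf log2_3_gt by simp

theorem proposition1:
  shows
   "(\<forall>p :: ('a \<times> 'b \<times> 'c) pmf. finite (set_pmf p) \<longrightarrow>
       \<comment> \<open>(GP)\<close>
       Icap2 p \<ge> 0 \<and>
       \<comment> \<open>(S)\<close>
       Icap2 p = Icap2 (map_pmf (\<lambda>(a, b, c). (b, a, c)) p) \<and>
       \<comment> \<open>(M)\<close>
       Icap2 p \<le> Icap1 (map_pmf (\<lambda>(a, b, c). (a, c)) p) \<and>
       (cond_entropy_pmf (map_pmf (\<lambda>(a, b, c). (a, b)) p) = 0 \<longrightarrow>
          Icap2 p = Icap1 (map_pmf (\<lambda>(a, b, c). (a, c)) p)) \<and>
       \<comment> \<open>(SM)\<close>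
       (mi_pmf (map_pmf (\<lambda>(a, b, c). ((a, b), c)) p) = mi_pmf (map_pmf (\<lambda>(a, b, c). (b, c)) p) \<longrightarrow>
          Icap2 p = Icap1 (map_pmf (\<lambda>(a, b, c). (a, c)) p)))
    \<and> \<comment> \<open>(I)\<close>
    (\<forall>p :: ('a \<times> 'c) pmf. finite (set_pmf p) \<longrightarrow> Icap1 p = mi_pmf p)
    \<and> \<comment> \<open>not (LP)\<close>
    (\<exists>p :: (nat \<times> nat \<times> nat) pmf. finite (set_pmf p) \<and> SI2 p < 0)
    \<and> \<comment> \<open>not (Id)\<close>
    (\<exists>p :: (nat \<times> nat) pmf. finite (set_pmf p) \<and>
       Icap2 (map_pmf (\<lambda>(a, b). (a, b, (a, b))) p) \<noteq> mi_pmf p)"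
proof (intro conjI allI impI)
  fix p :: "('a \<times> 'b \<times> 'c) pmf"
  assume fin: "finite (set_pmf p)"
  have Icap1: "Icap1 (map_pmf (\<lambda>(a, b, c). (a, c)) p) = mi_pmf (map_pmf (\<lambda>(a, b, c). (a, c)) p)"
    using fin by (simp add: Icap1_eq_mi_pmf)
  show "Icap2 p \<ge> 0" using fin by (rule Icap2_nonneg)
  show "Icap2 p = Icap2 (map_pmf (\<lambda>(a, b, c). (b, a, c)) p)" using fin by (rule Icap2_swap)
  show "Icap2 p \<le> Icap1 (map_pmf (\<lambda>(a, b, c). (a, c)) p)"
    unfolding Icap1 using fin by (rule Icap2_le_mi_pmf)
  show "Icap2 p = Icap1 (map_pmf (\<lambda>(a, b, c). (a, c)) p)"
    if "cond_entropy_pmf (map_pmf (\<lambda>(a, b, c). (a, b)) p) = 0"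
    unfolding Icap1 using Icap2_le_mi_pmf[OF fin]
      mi_pmf_le_Icap2_if_markov[OF fin markov_pmf_if_cond_entropy_eq_0[OF fin that]] by linarith
  show "Icap2 p = Icap1 (map_pmf (\<lambda>(a, b, c). (a, c)) p)"
    if "mi_pmf (map_pmf (\<lambda>(a, b, c). ((a, b), c)) p) = mi_pmf (map_pmf (\<lambda>(a, b, c). (b, c)) p)"
    unfolding Icap1 using Icap2_le_mi_pmf[OF fin]
      mi_pmf_le_Icap2_if_markov[OF fin markov_pmf_if_mi_pmf_eq[OF fin that]] by linarith
next
  fix p :: "('a \<times> 'c) pmf"
  assume "finite (set_pmf p)"
  then show "Icap1 p = mi_pmf p" by (rule Icap1_eq_mi_pmf)
next
  show "\<exists>p :: (nat \<times> nat \<times> nat) pmf. finite (set_pmf p) \<and> SI2 p < 0"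
    using SI2_three_point_sum_neg by (intro exI[of _ "map_pmf (\<lambda>(a, b). (a, b, a + b)) three_point_pmf"])
      (simp add: set_three_point_pmf)
next
  show "\<exists>p :: (nat \<times> nat) pmf. finite (set_pmf p) \<and>
      Icap2 (map_pmf (\<lambda>(a, b). (a, b, (a, b))) p) \<noteq> mi_pmf p"
    using Icap2_three_point_copy_ne_mi by (intro exI[of _ three_point_pmf]) (simp add: set_three_point_pmf)
qed

end
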